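(* There is a universal constant $c>0$ such that the following holds. Let $n\geq 1$, let $G_1,\ldots,G_n$ be independent standard real Gaussian random variables (mean $0$, variance $1$), and let $\lambda_1,\ldots,\lambda_n \in (0,1]$. Define \[ t := \sum_{i=1}^n \lambda_i,\qquad f := \sqrt{\sum_{i=1}^n \lambda_i^2},\qquad X := \sum_{i=1}^n \lambda_i G_i^2 . \] If $t \leq 1$, then $\Pr[X > t+f] > c$ and $\Pr[X < t] > c$.
   Context: The constant $c$ is independent of $n$ and of $\lambda_1,\ldots,\lambda_n$. *)

theory Defs
  imports "HOL-Probability.Probability"
begin

definition std_gaussian :: "real measure" where
  "std_gaussian = density lborel std_normal_density"

text \<open>Joint law of n independent standard Gaussians G_0, ..., G_(n-1):
  the product measure on {..<n}, the coordinate projections being the G_i.\<close>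
definition gauss_space :: "nat \<Rightarrow> (nat \<Rightarrow> real) measure" where
  "gauss_space n = PiM {..<n} (\<lambda>_. std_gaussian)"

end

theory Submission
  imports Defs
begin

text \<open>The deviation \<open>Z = X - t = (\<Sum>i. \<lambda>\<^sub>i (G\<^sub>i\<^sup>2 - 1))\<close> is a sum of independent centred
  variables, so its first four moments are explicit: \<open>E Z = 0\<close>, \<open>E Z\<^sup>2 = 2 f\<^sup>2\<close>,
  \<open>E Z\<^sup>3 = 8 (\<Sum>i. \<lambda>\<^sub>i\<^sup>3)\<close>, which lies in \<open>[0, 8 f\<^sup>3]\<close>, and \<open>E Z\<^sup>4 = 12 f\<^sup>4 + 48 (\<Sum>i. \<lambda>\<^sub>i\<^sup>4) \<le> 60 f\<^sup>4\<close>.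
  For each tail take a cubic that is nonpositive off the event in question but has
  expectation of order \<open>f\<^sup>3\<close>: \<open>(z - f)(z + 2f)\<^sup>2\<close> for \<open>Z > f\<close> and \<open>-z (3f - z)\<^sup>2\<close> for \<open>Z < 0\<close>.
  On the event the cubic is at most a multiple of \<open>z\<^sup>4/b + b\<^sup>3\<close>; with \<open>b\<close> of order \<open>f\<close> the
  fourth moment absorbs half of the expectation, and what is left is bounded by a multiple of
  \<open>f\<^sup>3\<close> times the probability of the event.\<close>

lemma prob_space_std_gaussian: "prob_space std_gaussian"
  unfolding std_gaussian_def by (rule prob_space_normal_density) simp

lemma sets_std_gaussian [measurable_cong, simp]: "sets std_gaussian = sets borel"
  by (simp add: std_gaussian_def)

lemma space_std_gaussian [simp]: "space std_gaussian = UNIV"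
  by (simp add: std_gaussian_def)

lemma std_gaussian_moment_even:
  "has_bochner_integral std_gaussian (\<lambda>x. x ^ (2 * k)) (fact (2 * k) / (2 ^ k * fact k))"
  unfolding std_gaussian_def
  using std_normal_moment_even[of k]
  by (intro has_bochner_integral_density) (simp_all add: normal_density_nonneg)

lemma std_gaussian_centered_square_moment:
  "has_bochner_integral std_gaussian (\<lambda>x. (x\<^sup>2 - 1) ^ k)
     (\<Sum>j\<le>k. of_nat (k choose j) * (fact (2 * j) / (2 ^ j * fact j)) * (-1) ^ (k - j))"
proof -
  have "(x\<^sup>2 - 1) ^ k = (\<Sum>j\<le>k. of_nat (k choose j) * x ^ (2 * j) * (-1) ^ (k - j))" for x :: real
    using binomial_ring[of "x\<^sup>2" "-1" k] by (simp add: power_mult)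
  then show ?thesis
    by (simp only:) (intro has_bochner_integral_sum has_bochner_integral_mult_left
        has_bochner_integral_mult_right std_gaussian_moment_even)
qed

lemma std_gaussian_centered_square_moments:
  assumes "k \<le> 4"
  shows "has_bochner_integral std_gaussian (\<lambda>x. (x\<^sup>2 - 1) ^ k) ([1, 0, 2, 8, 60] ! k)"
proof -
  have "k = 0 \<or> k = 1 \<or> k = 2 \<or> k = 3 \<or> k = 4"
    using assms by linarith
  then show ?thesis
    using std_gaussian_centered_square_moment[of k]
    by (elim disjE) (simp_all add: eval_nat_numeral fact_numeral)
qed

lemma prob_space_gauss_space: "prob_space (gauss_space n)"
  unfolding gauss_space_def by (intro prob_space_PiM prob_space_std_gaussian)

lemma space_gauss_space: "space (gauss_space n) = (\<Pi>\<^sub>E i\<in>{..<n}. UNIV)"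
  by (simp add: gauss_space_def space_PiM)

lemma measurable_gauss_space_component_std_gaussian:
  "i < n \<Longrightarrow> (\<lambda>G. G i) \<in> measurable (gauss_space n) std_gaussian"
  unfolding gauss_space_def by (intro measurable_component_singleton) auto

lemma measurable_gauss_space_component [measurable]:
  "(\<lambda>G. G i) \<in> borel_measurable (gauss_space n)"
proof (cases "i < n")
  case True
  have "measurable (gauss_space n) std_gaussian = measurable (gauss_space n) borel"
    by (rule measurable_cong_sets) simp_all
  then show ?thesis
    using measurable_gauss_space_component_std_gaussian[OF True] by simp
next
  case False
  then have "G i = undefined" if "G \<in> space (gauss_space n)" for G
    using that False PiE_arb[of G "{..<n}" "\<lambda>_. UNIV" i] by (simp add: space_gauss_space)
  then show ?thesis
    by (subst measurable_cong[where g = "\<lambda>_. undefined"]) auto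
qed

lemma distr_gauss_space_component:
  "i < n \<Longrightarrow> distr (gauss_space n) std_gaussian (\<lambda>G. G i) = std_gaussian"
  unfolding gauss_space_def by (rule distr_PiM_component) (auto intro: prob_space_std_gaussian)

lemma has_bochner_integral_gauss_space_component:
  fixes h :: "real \<Rightarrow> real"
  assumes i: "i < n" and h: "has_bochner_integral std_gaussian h v"
  shows "has_bochner_integral (gauss_space n) (\<lambda>G. h (G i)) v"
proof -
  note T = measurable_gauss_space_component_std_gaussian[OF i]
  have hm: "h \<in> borel_measurable std_gaussian"
    using h by (rule borel_measurable_has_bochner_integral)
  have "has_bochner_integral (distr (gauss_space n) std_gaussian (\<lambda>G. G i)) h v"
    using h distr_gauss_space_component[OF i] by simp
  then show ?thesis
    by (simp add: has_bochner_integral_iff integrable_distr_eq[OF T hm] integral_distr[OF T hm])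
qed

lemma indep_vars_gauss_space:
  assumes "0 < n"
  shows "prob_space.indep_vars (gauss_space n) (\<lambda>_. borel) (\<lambda>i G. G i) {..<n}"
proof -
  interpret prob_space "gauss_space n" by (rule prob_space_gauss_space)
  have sets: "sets (gauss_space n) = sets (\<Pi>\<^sub>M i\<in>{..<n}. borel)"
    unfolding gauss_space_def by (rule sets_PiM_cong) auto
  have "distr (gauss_space n) (\<Pi>\<^sub>M i\<in>{..<n}. borel) (\<lambda>G. \<lambda>i\<in>{..<n}. G i)
      = distr (gauss_space n) (gauss_space n) (\<lambda>G. G)"
    by (rule distr_cong) (auto simp: sets space_gauss_space PiE_restrict)
  also have "\<dots> = (\<Pi>\<^sub>M i\<in>{..<n}. std_gaussian)"
    by (simp add: gauss_space_def)
  also have "\<dots> = (\<Pi>\<^sub>M i\<in>{..<n}. distr (gauss_space n) borel (\<lambda>G. G i))"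
  proof (rule PiM_cong)
    fix i assume "i \<in> {..<n}"
    then have "std_gaussian = distr (gauss_space n) std_gaussian (\<lambda>G. G i)"
      by (simp add: distr_gauss_space_component)
    also have "\<dots> = distr (gauss_space n) borel (\<lambda>G. G i)"
      by (rule distr_cong) auto
    finally show "std_gaussian = distr (gauss_space n) borel (\<lambda>G. G i)" .
  qed simp
  finally show ?thesis
    using assms by (subst indep_vars_iff_distr_eq_PiM) auto
qed

lemma (in prob_space) integral_power_add_indep:
  fixes A B :: "'a \<Rightarrow> real"
  assumes ind: "indep_var borel A borel B"
    and iA: "\<And>j. j \<le> k \<Longrightarrow> integrable M (\<lambda>\<omega>. A \<omega> ^ j)"
    and iB: "\<And>j. j \<le> k \<Longrightarrow> integrable M (\<lambda>\<omega>. B \<omega> ^ j)"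
  shows "integrable M (\<lambda>\<omega>. (A \<omega> + B \<omega>) ^ k)"
    and "expectation (\<lambda>\<omega>. (A \<omega> + B \<omega>) ^ k) = (\<Sum>j\<le>k. of_nat (k choose j) *
           (expectation (\<lambda>\<omega>. A \<omega> ^ j) * expectation (\<lambda>\<omega>. B \<omega> ^ (k - j))))"
proof -
  have ind': "indep_var borel (\<lambda>\<omega>. A \<omega> ^ j) borel (\<lambda>\<omega>. B \<omega> ^ (k - j))" for j
  proof -
    have "indep_var borel ((\<lambda>x. x ^ j) \<circ> A) borel ((\<lambda>x. x ^ (k - j)) \<circ> B)"
      by (rule indep_var_compose[OF ind]) auto
    then show ?thesis by (simp add: comp_def)
  qed
  have binomial: "(\<lambda>\<omega>. (A \<omega> + B \<omega>) ^ k)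
      = (\<lambda>\<omega>. \<Sum>j\<le>k. of_nat (k choose j) * (A \<omega> ^ j * B \<omega> ^ (k - j)))"
    by (simp only: binomial_ring mult.assoc)
  have "integrable M (\<lambda>\<omega>. A \<omega> ^ j * B \<omega> ^ (k - j))"
    and "expectation (\<lambda>\<omega>. A \<omega> ^ j * B \<omega> ^ (k - j))
       = expectation (\<lambda>\<omega>. A \<omega> ^ j) * expectation (\<lambda>\<omega>. B \<omega> ^ (k - j))" if "j \<le> k" for j
    using indep_var_integrable[OF ind' iA iB] indep_var_lebesgue_integral[OF ind' iA iB] that
    by simp_all
  then show "integrable M (\<lambda>\<omega>. (A \<omega> + B \<omega>) ^ k)"
    and "expectation (\<lambda>\<omega>. (A \<omega> + B \<omega>) ^ k) = (\<Sum>j\<le>k. of_nat (k choose j) *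
           (expectation (\<lambda>\<omega>. A \<omega> ^ j) * expectation (\<lambda>\<omega>. B \<omega> ^ (k - j))))"
    unfolding binomial by (auto intro: Bochner_Integration.integrable_sum)
qed

lemma (in prob_space) moments_add_indep_centered:
  fixes A B :: "'a \<Rightarrow> real"
  assumes ind: "indep_var borel A borel B"
    and iA: "\<forall>j\<le>4. integrable M (\<lambda>\<omega>. A \<omega> ^ j)"
    and iB: "\<forall>j\<le>4. integrable M (\<lambda>\<omega>. B \<omega> ^ j)"
    and A0: "expectation A = 0" and B0: "expectation B = 0"
  shows "\<forall>k\<le>4. integrable M (\<lambda>\<omega>. (A \<omega> + B \<omega>) ^ k)"
    and "expectation (\<lambda>\<omega>. A \<omega> + B \<omega>) = 0"
    and "expectation (\<lambda>\<omega>. (A \<omega> + B \<omega>) ^ 2)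
       = expectation (\<lambda>\<omega>. A \<omega> ^ 2) + expectation (\<lambda>\<omega>. B \<omega> ^ 2)"
    and "expectation (\<lambda>\<omega>. (A \<omega> + B \<omega>) ^ 3)
       = expectation (\<lambda>\<omega>. A \<omega> ^ 3) + expectation (\<lambda>\<omega>. B \<omega> ^ 3)"
    and "expectation (\<lambda>\<omega>. (A \<omega> + B \<omega>) ^ 4) = expectation (\<lambda>\<omega>. A \<omega> ^ 4)
       + 6 * expectation (\<lambda>\<omega>. A \<omega> ^ 2) * expectation (\<lambda>\<omega>. B \<omega> ^ 2) + expectation (\<lambda>\<omega>. B \<omega> ^ 4)"
proof -
  have moment: "integrable M (\<lambda>\<omega>. (A \<omega> + B \<omega>) ^ k)"
    "expectation (\<lambda>\<omega>. (A \<omega> + B \<omega>) ^ k) = (\<Sum>j\<le>k. of_nat (k choose j) *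
       (expectation (\<lambda>\<omega>. A \<omega> ^ j) * expectation (\<lambda>\<omega>. B \<omega> ^ (k - j))))" if "k \<le> 4" for k
    using integral_power_add_indep[OF ind, of k] iA iB that by simp_all
  show "\<forall>k\<le>4. integrable M (\<lambda>\<omega>. (A \<omega> + B \<omega>) ^ k)"
    using moment(1) by blast
  show "expectation (\<lambda>\<omega>. A \<omega> + B \<omega>) = 0"
    using moment(2)[of 1] A0 B0 by (simp add: prob_space)
  show "expectation (\<lambda>\<omega>. (A \<omega> + B \<omega>) ^ 2)
       = expectation (\<lambda>\<omega>. A \<omega> ^ 2) + expectation (\<lambda>\<omega>. B \<omega> ^ 2)"
    using moment(2)[of 2] A0 B0 by (simp add: eval_nat_numeral sum.atMost_Suc prob_space)
  show "expectation (\<lambda>\<omega>. (A \<omega> + B \<omega>) ^ 3)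
       = expectation (\<lambda>\<omega>. A \<omega> ^ 3) + expectation (\<lambda>\<omega>. B \<omega> ^ 3)"
    using moment(2)[of 3] A0 B0 by (simp add: eval_nat_numeral sum.atMost_Suc prob_space)
  show "expectation (\<lambda>\<omega>. (A \<omega> + B \<omega>) ^ 4) = expectation (\<lambda>\<omega>. A \<omega> ^ 4)
       + 6 * expectation (\<lambda>\<omega>. A \<omega> ^ 2) * expectation (\<lambda>\<omega>. B \<omega> ^ 2) + expectation (\<lambda>\<omega>. B \<omega> ^ 4)"
    using moment(2)[of 4] A0 B0 by (simp add: eval_nat_numeral sum.atMost_Suc prob_space)
qed

definition centered_chisq_sum :: "(nat \<Rightarrow> real) \<Rightarrow> nat \<Rightarrow> (nat \<Rightarrow> real) \<Rightarrow> real" where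
  "centered_chisq_sum lam m G = (\<Sum>i<m. lam i * ((G i)\<^sup>2 - 1))"

lemma indep_var_centered_chisq_sum:
  assumes "m < n"
  shows "prob_space.indep_var (gauss_space n)
           borel (\<lambda>G. lam m * ((G m)\<^sup>2 - 1)) borel (centered_chisq_sum lam m)"
proof -
  interpret prob_space "gauss_space n" by (rule prob_space_gauss_space)
  have "indep_vars (\<lambda>_. borel) (\<lambda>i G. lam i * ((G i)\<^sup>2 - 1)) {..<n}"
    using assms
    by (intro indep_vars_compose2[OF indep_vars_gauss_space, where Y = "\<lambda>i x. lam i * (x\<^sup>2 - 1)"]) auto
  then have "indep_vars (\<lambda>_. borel) (\<lambda>i G. lam i * ((G i)\<^sup>2 - 1)) (insert m {..<m})"
    by (rule indep_vars_subset) (use assms in auto)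
  from indep_vars_sum[OF _ _ this] show ?thesis
    unfolding centered_chisq_sum_def[abs_def] by simp
qed

lemma has_bochner_integral_scaled_centered_square:
  assumes "i < n" and "k \<le> 4"
  shows "has_bochner_integral (gauss_space n) (\<lambda>G. (lam i * ((G i)\<^sup>2 - 1)) ^ k)
           (lam i ^ k * [1, 0, 2, 8, 60] ! k)"
  using has_bochner_integral_gauss_space_component[OF assms(1)
      has_bochner_integral_mult_right[OF std_gaussian_centered_square_moments[OF assms(2)]]]
  by (simp add: power_mult_distrib)

lemma centered_chisq_sum_moments:
  fixes lam :: "nat \<Rightarrow> real"
  assumes "m \<le> n"
  shows "(\<forall>k\<le>4. integrable (gauss_space n) (\<lambda>G. centered_chisq_sum lam m G ^ k))
    \<and> integral\<^sup>L (gauss_space n) (centered_chisq_sum lam m) = 0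
    \<and> integral\<^sup>L (gauss_space n) (\<lambda>G. centered_chisq_sum lam m G ^ 2) = 2 * (\<Sum>i<m. lam i ^ 2)
    \<and> integral\<^sup>L (gauss_space n) (\<lambda>G. centered_chisq_sum lam m G ^ 3) = 8 * (\<Sum>i<m. lam i ^ 3)
    \<and> integral\<^sup>L (gauss_space n) (\<lambda>G. centered_chisq_sum lam m G ^ 4)
        = 12 * (\<Sum>i<m. lam i ^ 2)\<^sup>2 + 48 * (\<Sum>i<m. lam i ^ 4)"
  using assms
proof (induction m)
  case 0
  interpret prob_space "gauss_space n" by (rule prob_space_gauss_space)
  show ?case by (simp add: centered_chisq_sum_def)
next
  case (Suc m)
  interpret prob_space "gauss_space n" by (rule prob_space_gauss_space)
  define Y where "Y = (\<lambda>G :: nat \<Rightarrow> real. lam m * ((G m)\<^sup>2 - 1))"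
  define S where "S = centered_chisq_sum lam m"
  have m: "m < n" using Suc.prems by simp
  have Y: "integrable (gauss_space n) (\<lambda>G. Y G ^ k)"
    "expectation (\<lambda>G. Y G ^ k) = lam m ^ k * [1, 0, 2, 8, 60] ! k" if "k \<le> 4" for k
    using has_bochner_integral_scaled_centered_square[OF m that, of lam]
    unfolding Y_def has_bochner_integral_iff by simp_all
  then have Y_integrable: "\<forall>k\<le>4. integrable (gauss_space n) (\<lambda>G. Y G ^ k)"
    by blast
  have Y_moments: "expectation Y = 0" "expectation (\<lambda>G. Y G ^ 2) = 2 * lam m ^ 2"
    "expectation (\<lambda>G. Y G ^ 3) = 8 * lam m ^ 3" "expectation (\<lambda>G. Y G ^ 4) = 60 * lam m ^ 4"
    using Y(2)[of 1] Y(2)[of 2] Y(2)[of 3] Y(2)[of 4] by simp_all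
  have S: "\<forall>k\<le>4. integrable (gauss_space n) (\<lambda>G. S G ^ k)"
    "expectation S = 0"
    "expectation (\<lambda>G. S G ^ 2) = 2 * (\<Sum>i<m. lam i ^ 2)"
    "expectation (\<lambda>G. S G ^ 3) = 8 * (\<Sum>i<m. lam i ^ 3)"
    "expectation (\<lambda>G. S G ^ 4) = 12 * (\<Sum>i<m. lam i ^ 2)\<^sup>2 + 48 * (\<Sum>i<m. lam i ^ 4)"
    using Suc by (simp_all add: S_def)
  note sum_moments = moments_add_indep_centered[OF
      indep_var_centered_chisq_sum[OF m, of lam, folded Y_def S_def] Y_integrable S(1) Y_moments(1) S(2)]
  have "centered_chisq_sum lam (Suc m) = (\<lambda>G. Y G + S G)"
    by (simp add: fun_eq_iff centered_chisq_sum_def Y_def S_def)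
  moreover have "expectation (\<lambda>G. (Y G + S G) ^ 2) = 2 * (\<Sum>i<Suc m. lam i ^ 2)"
    and "expectation (\<lambda>G. (Y G + S G) ^ 3) = 8 * (\<Sum>i<Suc m. lam i ^ 3)"
    and "expectation (\<lambda>G. (Y G + S G) ^ 4)
           = 12 * (\<Sum>i<Suc m. lam i ^ 2)\<^sup>2 + 48 * (\<Sum>i<Suc m. lam i ^ 4)"
    unfolding sum_moments(3-5) S(3-5) Y_moments(2-4)
    by (simp_all add: power2_eq_square power4_eq_xxxx algebra_simps)
  ultimately show ?case
    using sum_moments(1,2) by simp
qed

lemma sum_power4_le_square_sum_power2:
  fixes x :: "'i \<Rightarrow> real"
  assumes "finite A"
  shows "(\<Sum>i\<in>A. x i ^ 4) \<le> (\<Sum>i\<in>A. x i ^ 2)\<^sup>2"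
proof -
  have "(\<Sum>i\<in>A. x i ^ 4) \<le> (\<Sum>i\<in>A. x i ^ 2 * (\<Sum>j\<in>A. x j ^ 2))"
  proof (rule sum_mono)
    fix i assume "i \<in> A"
    then have "x i ^ 2 \<le> (\<Sum>j\<in>A. x j ^ 2)"
      using assms by (intro member_le_sum) auto
    then have "x i ^ 2 * x i ^ 2 \<le> x i ^ 2 * (\<Sum>j\<in>A. x j ^ 2)"
      by (intro mult_left_mono) auto
    then show "x i ^ 4 \<le> x i ^ 2 * (\<Sum>j\<in>A. x j ^ 2)"
      by (simp add: power4_eq_xxxx power2_eq_square mult.assoc)
  qed
  also have "\<dots> = (\<Sum>i\<in>A. x i ^ 2)\<^sup>2"
    by (simp add: sum_distrib_right power2_eq_square)
  finally show ?thesis .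
qed

lemma sum_power3_le_sqrt_sum_power2_cube:
  fixes x :: "'i \<Rightarrow> real"
  assumes "finite A"
  shows "(\<Sum>i\<in>A. x i ^ 3) \<le> sqrt (\<Sum>i\<in>A. x i ^ 2) ^ 3"
proof -
  define f where "f = sqrt (\<Sum>i\<in>A. x i ^ 2)"
  have "(\<Sum>i\<in>A. x i ^ 3) \<le> (\<Sum>i\<in>A. x i ^ 2 * f)"
  proof (rule sum_mono)
    fix i assume "i \<in> A"
    then have "x i ^ 2 \<le> (\<Sum>j\<in>A. x j ^ 2)"
      using assms by (intro member_le_sum) auto
    then have "\<bar>x i\<bar> \<le> f"
      unfolding f_def using real_sqrt_le_mono real_sqrt_abs by metis
    then have "x i ^ 2 * x i \<le> x i ^ 2 * f"
      by (intro mult_left_mono) auto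
    then show "x i ^ 3 \<le> x i ^ 2 * f"
      by (simp add: power2_eq_square power3_eq_cube)
  qed
  also have "\<dots> = f\<^sup>2 * f"
    by (simp add: f_def sum_nonneg flip: sum_distrib_right)
  also have "\<dots> = f ^ 3"
    by (simp add: power3_eq_cube power2_eq_square)
  finally show ?thesis
    unfolding f_def .
qed

lemma cube_le_fourth_power_div_plus_cube:
  fixes z b :: real
  assumes "0 \<le> z" and "0 < b"
  shows "z ^ 3 \<le> z ^ 4 / b + b ^ 3"
proof (cases "z \<le> b")
  case True
  then have "z ^ 3 \<le> b ^ 3"
    using assms by (intro power_mono) auto
  moreover have "0 \<le> z ^ 4 / b"
    using assms by simp
  ultimately show ?thesis by linarith
next
  case False
  then have "z ^ 3 * b \<le> z ^ 3 * z"
    using assms by (intro mult_left_mono) auto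
  then have "z ^ 3 \<le> z ^ 4 / b"
    using assms by (simp add: field_simps power_Suc2 flip: power_Suc)
  moreover have "0 \<le> b ^ 3"
    using assms by simp
  ultimately show ?thesis by linarith
qed

lemma upper_tail_cubic_le:
  fixes z f b :: real
  assumes "0 \<le> f" and "0 < b"
  shows "(z - f) * (z + 2 * f)\<^sup>2 \<le> 9 / b * z ^ 4 + 9 * b ^ 3 * (if f < z then 1 else 0)"
proof (cases "f < z")
  case True
  have "(z - f) * (z + 2 * f)\<^sup>2 \<le> z * (3 * z)\<^sup>2"
    using True assms by (intro mult_mono power_mono) auto
  also have "\<dots> = 9 * z ^ 3"
    by (simp add: power2_eq_square power3_eq_cube)
  also have "\<dots> \<le> 9 * (z ^ 4 / b + b ^ 3)"
    using True assms cube_le_fourth_power_div_plus_cube[of z b] by simp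
  finally show ?thesis
    using True by simp
next
  case False
  then have "(z - f) * (z + 2 * f)\<^sup>2 \<le> 0"
    by (intro mult_nonpos_nonneg) auto
  moreover have "0 \<le> 9 / b * z ^ 4"
    using assms by (simp add: zero_le_even_power)
  ultimately show ?thesis
    using False by simp
qed

lemma lower_tail_cubic_le:
  fixes z f b :: real
  assumes "0 \<le> f" and "0 < b"
  shows "- z * (3 * f - z)\<^sup>2 \<le> 16 / b * z ^ 4 + 16 * (b ^ 3 + f ^ 3) * (if z < 0 then 1 else 0)"
proof (cases "z < 0")
  case True
  define u where "u = - z"
  have u: "0 < u"
    using True by (simp add: u_def)
  have "u * (u + 3 * f)\<^sup>2 \<le> 16 * u ^ 3 + 16 * f ^ 3"
  proof (cases "u \<le> f")
    case True
    then have "u * (u + 3 * f)\<^sup>2 \<le> f * (4 * f)\<^sup>2"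
      using u by (intro mult_mono power_mono) auto
    moreover have "f * (4 * f)\<^sup>2 = 16 * f ^ 3"
      by (simp add: power2_eq_square power3_eq_cube)
    moreover have "0 \<le> u ^ 3"
      using u by simp
    ultimately show ?thesis by linarith
  next
    case False
    then have "u * (u + 3 * f)\<^sup>2 \<le> u * (4 * u)\<^sup>2"
      using u assms by (intro mult_mono power_mono) auto
    moreover have "u * (4 * u)\<^sup>2 = 16 * u ^ 3"
      by (simp add: power2_eq_square power3_eq_cube)
    moreover have "0 \<le> f ^ 3"
      using assms by simp
    ultimately show ?thesis by linarith
  qed
  also have "\<dots> \<le> 16 * (u ^ 4 / b + b ^ 3) + 16 * f ^ 3"
    using u assms cube_le_fourth_power_div_plus_cube[of u b] by simp
  finally show ?thesis
    using True by (simp add: u_def algebra_simps)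
next
  case False
  then have "- z * (3 * f - z)\<^sup>2 \<le> 0"
    by (simp add: mult_nonneg_nonneg)
  moreover have "0 \<le> 16 / b * z ^ 4"
    using assms by (simp add: zero_le_even_power)
  ultimately show ?thesis
    using False by (simp only: if_False mult_zero_right add_0_right)
qed

lemma (in prob_space) expectation_le_fourth_moment_plus_prob:
  fixes g Z :: "'a \<Rightarrow> real"
  assumes g: "integrable M g" and Z4: "integrable M (\<lambda>\<omega>. Z \<omega> ^ 4)" and A: "A \<in> events"
    and b: "0 < b" and c: "0 \<le> c" and m4: "expectation (\<lambda>\<omega>. Z \<omega> ^ 4) \<le> \<mu>"
    and le: "\<And>\<omega>. \<omega> \<in> space M \<Longrightarrow> g \<omega> \<le> c / b * Z \<omega> ^ 4 + d * indicator A \<omega>"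
  shows "expectation g \<le> c / b * \<mu> + d * prob A"
proof -
  have indicator: "integrable M (indicator A :: 'a \<Rightarrow> real)"
    using A by (simp add: integrable_indicator_iff less_top[symmetric])
  have "expectation g \<le> expectation (\<lambda>\<omega>. c / b * Z \<omega> ^ 4 + d * indicator A \<omega>)"
    using g Z4 indicator le by (intro integral_mono) auto
  also have "\<dots> = c / b * expectation (\<lambda>\<omega>. Z \<omega> ^ 4) + d * prob A"
    using Z4 indicator A by (simp add: Int_absorb2)
  also have "\<dots> \<le> c / b * \<mu> + d * prob A"
    using m4 b c by (intro add_right_mono mult_left_mono) auto
  finally show ?thesis .
qed

lemma (in prob_space) prob_greater_ge_of_moments:
  fixes Z :: "'a \<Rightarrow> real"
  assumes int: "\<forall>k\<le>4. integrable M (\<lambda>\<omega>. Z \<omega> ^ k)"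
    and f: "0 < f" and K: "0 < K"
    and m2: "2 * f\<^sup>2 \<le> expectation (\<lambda>\<omega>. Z \<omega> ^ 2)"
    and m3: "0 \<le> expectation (\<lambda>\<omega>. Z \<omega> ^ 3)"
    and m4: "expectation (\<lambda>\<omega>. Z \<omega> ^ 4) \<le> K * f ^ 4"
  shows "1 / (6561 * K ^ 3) \<le> prob {\<omega> \<in> space M. f < Z \<omega>}"
proof -
  define A where "A = {\<omega> \<in> space M. f < Z \<omega>}"
  \<comment> \<open>this choice makes the fourth-moment contribution exactly \<open>f\<^sup>3\<close>\<close>
  define b where "b = 9 * K * f"
  have b: "0 < b"
    using f K by (simp add: b_def)
  have int2: "integrable M (\<lambda>\<omega>. Z \<omega> ^ 2)" and int3: "integrable M (\<lambda>\<omega>. Z \<omega> ^ 3)"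
    and int4: "integrable M (\<lambda>\<omega>. Z \<omega> ^ 4)"
    using int by simp_all
  have "random_variable borel Z"
    using int[rule_format, of 1] by (simp add: borel_measurable_integrable)
  then have A: "A \<in> events"
    unfolding A_def by measurable
  have cubic: "(\<lambda>\<omega>. (Z \<omega> - f) * (Z \<omega> + 2 * f)\<^sup>2) = (\<lambda>\<omega>. Z \<omega> ^ 3 + 3 * f * Z \<omega> ^ 2 - 4 * f ^ 3)"
    by (simp add: fun_eq_iff power2_eq_square power3_eq_cube algebra_simps)
  have "expectation (\<lambda>\<omega>. (Z \<omega> - f) * (Z \<omega> + 2 * f)\<^sup>2)
      = expectation (\<lambda>\<omega>. Z \<omega> ^ 3) + 3 * f * expectation (\<lambda>\<omega>. Z \<omega> ^ 2) - 4 * f ^ 3"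
    unfolding cubic using int2 int3 by (simp add: prob_space)
  moreover have "6 * f ^ 3 \<le> 3 * f * expectation (\<lambda>\<omega>. Z \<omega> ^ 2)"
    using mult_left_mono[OF m2, of "3 * f"] f by (simp add: power2_eq_square power3_eq_cube)
  ultimately have "2 * f ^ 3 \<le> expectation (\<lambda>\<omega>. (Z \<omega> - f) * (Z \<omega> + 2 * f)\<^sup>2)"
    using m3 by linarith
  also have "\<dots> \<le> 9 / b * (K * f ^ 4) + 9 * b ^ 3 * prob A"
  proof (rule expectation_le_fourth_moment_plus_prob[OF _ int4 A b _ m4])
    show "integrable M (\<lambda>\<omega>. (Z \<omega> - f) * (Z \<omega> + 2 * f)\<^sup>2)"
      unfolding cubic using int2 int3 by simp
    fix \<omega> assume "\<omega> \<in> space M"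
    then have "indicator A \<omega> = (if f < Z \<omega> then 1 else (0::real))"
      by (simp add: A_def)
    then show "(Z \<omega> - f) * (Z \<omega> + 2 * f)\<^sup>2 \<le> 9 / b * Z \<omega> ^ 4 + 9 * b ^ 3 * indicator A \<omega>"
      using upper_tail_cubic_le[OF less_imp_le[OF f] b, of "Z \<omega>"] by (simp only:)
  qed simp
  also have "\<dots> = f ^ 3 + 6561 * K ^ 3 * f ^ 3 * prob A"
    using f K by (simp add: b_def power_mult_distrib power4_eq_xxxx power3_eq_cube)
  finally have "f ^ 3 * 1 \<le> f ^ 3 * (6561 * K ^ 3 * prob A)"
    by (simp add: algebra_simps)
  then have "1 \<le> 6561 * K ^ 3 * prob A"
    using f by (simp add: mult_le_cancel_left_pos)
  then show ?thesis
    using K by (simp add: A_def field_simps)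
qed

lemma (in prob_space) prob_negative_ge_of_moments:
  fixes Z :: "'a \<Rightarrow> real"
  assumes int: "\<forall>k\<le>4. integrable M (\<lambda>\<omega>. Z \<omega> ^ k)"
    and f: "0 < f" and K: "0 < K"
    and m1: "expectation Z = 0"
    and m2: "2 * f\<^sup>2 \<le> expectation (\<lambda>\<omega>. Z \<omega> ^ 2)"
    and m3: "expectation (\<lambda>\<omega>. Z \<omega> ^ 3) \<le> 8 * f ^ 3"
    and m4: "expectation (\<lambda>\<omega>. Z \<omega> ^ 4) \<le> K * f ^ 4"
  shows "1 / (8 * (512 * K ^ 3 + 1)) \<le> prob {\<omega> \<in> space M. Z \<omega> < 0}"
proof -
  define A where "A = {\<omega> \<in> space M. Z \<omega> < 0}"
  \<comment> \<open>this choice makes the fourth-moment contribution exactly \<open>2 f\<^sup>3\<close>\<close>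
  define b where "b = 8 * K * f"
  have b: "0 < b"
    using f K by (simp add: b_def)
  have int1: "integrable M Z" and int2: "integrable M (\<lambda>\<omega>. Z \<omega> ^ 2)"
    and int3: "integrable M (\<lambda>\<omega>. Z \<omega> ^ 3)" and int4: "integrable M (\<lambda>\<omega>. Z \<omega> ^ 4)"
    using int[rule_format, of 1] int by simp_all
  then have "random_variable borel Z"
    by (simp add: borel_measurable_integrable)
  then have A: "A \<in> events"
    unfolding A_def by measurable
  have cubic: "(\<lambda>\<omega>. - Z \<omega> * (3 * f - Z \<omega>)\<^sup>2)
      = (\<lambda>\<omega>. 6 * f * Z \<omega> ^ 2 - 9 * f\<^sup>2 * Z \<omega> - Z \<omega> ^ 3)"
    by (simp add: fun_eq_iff power2_eq_square power3_eq_cube algebra_simps)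
  have "expectation (\<lambda>\<omega>. - Z \<omega> * (3 * f - Z \<omega>)\<^sup>2)
      = 6 * f * expectation (\<lambda>\<omega>. Z \<omega> ^ 2) - 9 * f\<^sup>2 * expectation Z - expectation (\<lambda>\<omega>. Z \<omega> ^ 3)"
    unfolding cubic using int1 int2 int3 by simp
  moreover have "12 * f ^ 3 \<le> 6 * f * expectation (\<lambda>\<omega>. Z \<omega> ^ 2)"
    using mult_left_mono[OF m2, of "6 * f"] f by (simp add: power2_eq_square power3_eq_cube)
  ultimately have "4 * f ^ 3 \<le> expectation (\<lambda>\<omega>. - Z \<omega> * (3 * f - Z \<omega>)\<^sup>2)"
    using m1 m3 by simp
  also have "\<dots> \<le> 16 / b * (K * f ^ 4) + 16 * (b ^ 3 + f ^ 3) * prob A"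
  proof (rule expectation_le_fourth_moment_plus_prob[OF _ int4 A b _ m4])
    show "integrable M (\<lambda>\<omega>. - Z \<omega> * (3 * f - Z \<omega>)\<^sup>2)"
      unfolding cubic using int1 int2 int3 by simp
    fix \<omega> assume "\<omega> \<in> space M"
    then have "indicator A \<omega> = (if Z \<omega> < 0 then 1 else (0::real))"
      by (simp add: A_def)
    then show "- Z \<omega> * (3 * f - Z \<omega>)\<^sup>2
        \<le> 16 / b * Z \<omega> ^ 4 + 16 * (b ^ 3 + f ^ 3) * indicator A \<omega>"
      using lower_tail_cubic_le[OF less_imp_le[OF f] b, of "Z \<omega>"] by (simp only:)
  qed simp
  also have "\<dots> = 2 * f ^ 3 + 16 * (512 * K ^ 3 + 1) * f ^ 3 * prob A"
    using f K by (simp add: b_def power_mult_distrib power4_eq_xxxx power3_eq_cube algebra_simps)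
  finally have "f ^ 3 * 1 \<le> f ^ 3 * (8 * (512 * K ^ 3 + 1) * prob A)"
    by (simp add: algebra_simps)
  then have "1 \<le> 8 * (512 * K ^ 3 + 1) * prob A"
    using f by (simp add: mult_le_cancel_left_pos)
  then show ?thesis
    using K by (simp add: A_def field_simps add_pos_pos)
qed

lemma gauss_space_weighted_chisq_tails:
  fixes lam :: "nat \<Rightarrow> real"
  assumes n: "1 \<le> n" and pos: "\<forall>i<n. 0 < lam i"
  defines "t \<equiv> \<Sum>i<n. lam i" and "f \<equiv> sqrt (\<Sum>i<n. (lam i)\<^sup>2)"
    and "X \<equiv> \<lambda>G. \<Sum>i<n. lam i * (G i)\<^sup>2"
  shows "1 / (6561 * 60 ^ 3) \<le> measure (gauss_space n) {G \<in> space (gauss_space n). t + f < X G}"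
    and "1 / (8 * (512 * 60 ^ 3 + 1)) \<le> measure (gauss_space n) {G \<in> space (gauss_space n). X G < t}"
proof -
  interpret prob_space "gauss_space n"
    by (rule prob_space_gauss_space)
  define Z where "Z = centered_chisq_sum lam n"
  have X_eq: "X G = t + Z G" for G
    by (simp add: X_def t_def Z_def centered_chisq_sum_def right_diff_distrib sum_subtractf)
  have "0 < (lam 0)\<^sup>2" and "(lam 0)\<^sup>2 \<le> (\<Sum>i<n. (lam i)\<^sup>2)"
    using n pos by (auto intro: member_le_sum)
  then have "0 < (\<Sum>i<n. (lam i)\<^sup>2)"
    by linarith
  then have f: "0 < f" and f2: "f\<^sup>2 = (\<Sum>i<n. (lam i)\<^sup>2)"
    by (simp_all add: f_def)
  have int: "\<forall>k\<le>4. integrable (gauss_space n) (\<lambda>G. Z G ^ k)"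
    and m1: "expectation Z = 0"
    and m2: "expectation (\<lambda>G. Z G ^ 2) = 2 * f\<^sup>2"
    and m3: "expectation (\<lambda>G. Z G ^ 3) = 8 * (\<Sum>i<n. lam i ^ 3)"
    and m4: "expectation (\<lambda>G. Z G ^ 4) = 12 * (f\<^sup>2)\<^sup>2 + 48 * (\<Sum>i<n. lam i ^ 4)"
    using centered_chisq_sum_moments[of n n lam] by (simp_all add: Z_def f2)
  have "f ^ 4 = (f\<^sup>2)\<^sup>2"
    by simp
  then have "expectation (\<lambda>G. Z G ^ 4) \<le> 60 * f ^ 4"
    using m4 sum_power4_le_square_sum_power2[OF finite_lessThan, of lam n] unfolding f2 by linarith
  moreover have "0 \<le> expectation (\<lambda>G. Z G ^ 3)"
    unfolding m3 using pos by (auto intro!: sum_nonneg)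
  moreover have "expectation (\<lambda>G. Z G ^ 3) \<le> 8 * f ^ 3"
    using m3 sum_power3_le_sqrt_sum_power2_cube[of "{..<n}" lam] by (simp add: f_def)
  ultimately have "1 / (6561 * 60 ^ 3) \<le> prob {G \<in> space (gauss_space n). f < Z G}"
    and "1 / (8 * (512 * 60 ^ 3 + 1)) \<le> prob {G \<in> space (gauss_space n). Z G < 0}"
    using prob_greater_ge_of_moments[OF int f, of 60] prob_negative_ge_of_moments[OF int f, of 60]
      m1 m2 by simp_all
  then show "1 / (6561 * 60 ^ 3) \<le> measure (gauss_space n) {G \<in> space (gauss_space n). t + f < X G}"
    and "1 / (8 * (512 * 60 ^ 3 + 1)) \<le> measure (gauss_space n) {G \<in> space (gauss_space n). X G < t}"
    by (simp_all add: X_eq)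
qed

theorem proposition1:
  shows "\<exists>c::real. c > 0 \<and>
    (\<forall>(n::nat) (lam::nat \<Rightarrow> real).
       n \<ge> 1 \<longrightarrow> (\<forall>i<n. 0 < lam i \<and> lam i \<le> 1) \<longrightarrow>
       (\<Sum>i<n. lam i) \<le> 1 \<longrightarrow>
       (let t = (\<Sum>i<n. lam i);
            f = sqrt (\<Sum>i<n. (lam i)\<^sup>2);
            X = (\<lambda>G. \<Sum>i<n. lam i * (G i)\<^sup>2);
            M = gauss_space n
        in measure M {G \<in> space M. X G > t + f} > c
         \<and> measure M {G \<in> space M. X G < t} > c))"
proof (intro exI[of _ "1 / 10 ^ 10"] conjI allI impI)
  fix n :: nat and lam :: "nat \<Rightarrow> real"
  assume "n \<ge> 1" and "\<forall>i<n. 0 < lam i \<and> lam i \<le> 1"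
  then have "n \<ge> 1" and "\<forall>i<n. 0 < lam i"
    by auto
  note tails = gauss_space_weighted_chisq_tails[OF this]
  have "1 / 10 ^ 10 < (1 / (6561 * 60 ^ 3) :: real)"
    and "1 / 10 ^ 10 < (1 / (8 * (512 * 60 ^ 3 + 1)) :: real)"
    by simp_all
  then show "let t = (\<Sum>i<n. lam i);
            f = sqrt (\<Sum>i<n. (lam i)\<^sup>2);
            X = (\<lambda>G. \<Sum>i<n. lam i * (G i)\<^sup>2);
            M = gauss_space n
        in measure M {G \<in> space M. X G > t + f} > 1 / 10 ^ 10
         \<and> measure M {G \<in> space M. X G < t} > 1 / 10 ^ 10"
    unfolding Let_def using tails by linarith
qed simp

end
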